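(* Let $\mathcal{L},\mathcal{L}'$ be distributive abstract logics and $h:\mathcal{L}\to\mathcal{L}'$ a stable logic map. Then $h$ is a lattice morphism of the associated lattices: for all $a,b\in Expr_{\mathcal{L}}$, $h(a\vee b)=_{\mathcal{L}'}h(a)\vee h(b)$ and $h(a\wedge b)=_{\mathcal{L}'}h(a)\wedge h(b)$.
   Context: An abstract logic is a triple $\mathcal{L}=(Expr_{\mathcal{L}},Th_{\mathcal{L}},\mathcal{C}_{\mathcal{L}})$ where $Expr_{\mathcal{L}}$ is a set, $Th_{\mathcal{L}}$ a non-empty set of subsets of $Expr_{\mathcal{L}}$ (theories) closed under intersections of non-empty subfamilies, and $\mathcal{C}_{\mathcal{L}}$ a set of operations on $Expr_{\mathcal{L}}$. $\mathcal{L}$ is closed under union of chains if the union of every non-empty chain of theories is a theory. A theory $T$ is prime if $T=\bigcap\mathcal{T}$ with $\mathcal{T}\subseteq Th_{\mathcal{L}}$ non-empty finite implies $T\in\mathcal{T}$; totally prime if this holds for non-empty $\mathcal{T}$ of any size. $PTh_{\mathcal{L}}$, $TPTh_{\mathcal{L}}$ denote these sets. A distributive abstract logic is one closed under union of chains with binary connectives $\vee,\wedge$ such that for all $a,b$ and all $T\in TPTh_{\mathcal{L}}$: $a\vee b\in T$ iff $a\in T$ or $b\in T$; $a\wedge b\in T$ iff $a,b\in T$. The associated lattice on $Expr_{\mathcal{L}}$ has order $a\le b$ iff every prime theory containing $a$ contains $b$, with meet $\wedge$ and join $\vee$. $x=_{\mathcal{L}'}y$ means $x\Vdash_{\mathcal{L}'}y$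 and $y\Vdash_{\mathcal{L}'}x$, where $x\Vdash_{\mathcal{L}'}y$ means every theory of $\mathcal{L}'$ containing $x$ contains $y$. A stable logic map $h:\mathcal{L}\to\mathcal{L}'$ is a function $Expr_{\mathcal{L}}\to Expr_{\mathcal{L}'}$ with $h^{-1}(T')\in Th_{\mathcal{L}}$ for all $T'\in Th_{\mathcal{L}'}$ and $h^{-1}(P')\in PTh_{\mathcal{L}}$ for all $P'\in PTh_{\mathcal{L}'}$. *)

theory Defs
  imports Main
begin

text \<open>Expressions of a logic are the elements of a type 'a (Expr = UNIV).
  A logic is given by its set of theories Th :: 'a set set; the connectives
  of a distributive logic are given as binary operations jn (join, \<or>), mt (meet, \<and>).\<close>

definition abstract_logic :: "'a set set \<Rightarrow> bool" where
  "abstract_logic Th \<longleftrightarrow> Th \<noteq> {} \<and>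
     (\<forall>F. F \<noteq> {} \<and> F \<subseteq> Th \<longrightarrow> \<Inter>F \<in> Th)"

definition closed_union_chains :: "'a set set \<Rightarrow> bool" where
  "closed_union_chains Th \<longleftrightarrow>
     (\<forall>C. C \<noteq> {} \<and> C \<subseteq> Th \<and> (\<forall>X\<in>C. \<forall>Y\<in>C. X \<subseteq> Y \<or> Y \<subseteq> X) \<longrightarrow> \<Union>C \<in> Th)"

definition prime_theory :: "'a set set \<Rightarrow> 'a set \<Rightarrow> bool" where
  "prime_theory Th T \<longleftrightarrow> T \<in> Th \<and>
     (\<forall>F. F \<subseteq> Th \<and> F \<noteq> {} \<and> finite F \<and> T = \<Inter>F \<longrightarrow> T \<in> F)"

definition totally_prime_theory :: "'a set set \<Rightarrow> 'a set \<Rightarrow> bool" where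
  "totally_prime_theory Th T \<longleftrightarrow> T \<in> Th \<and>
     (\<forall>F. F \<subseteq> Th \<and> F \<noteq> {} \<and> T = \<Inter>F \<longrightarrow> T \<in> F)"

definition distributive_logic ::
  "'a set set \<Rightarrow> ('a \<Rightarrow> 'a \<Rightarrow> 'a) \<Rightarrow> ('a \<Rightarrow> 'a \<Rightarrow> 'a) \<Rightarrow> bool" where
  "distributive_logic Th jn mt \<longleftrightarrow> abstract_logic Th \<and> closed_union_chains Th \<and>
     (\<forall>a b T. totally_prime_theory Th T \<longrightarrow>
        (jn a b \<in> T \<longleftrightarrow> a \<in> T \<or> b \<in> T) \<and>
        (mt a b \<in> T \<longleftrightarrow> a \<in> T \<and> b \<in> T))"

definition entails :: "'a set set \<Rightarrow> 'a \<Rightarrow> 'a \<Rightarrow> bool" where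
  "entails Th x y \<longleftrightarrow> (\<forall>T\<in>Th. x \<in> T \<longrightarrow> y \<in> T)"

definition logic_eq :: "'a set set \<Rightarrow> 'a \<Rightarrow> 'a \<Rightarrow> bool" where
  "logic_eq Th x y \<longleftrightarrow> entails Th x y \<and> entails Th y x"

definition stable_logic_map :: "'a set set \<Rightarrow> 'b set set \<Rightarrow> ('a \<Rightarrow> 'b) \<Rightarrow> bool" where
  "stable_logic_map Th Th' h \<longleftrightarrow>
     (\<forall>T'\<in>Th'. h -` T' \<in> Th) \<and>
     (\<forall>P'. prime_theory Th' P' \<longrightarrow> prime_theory Th (h -` P'))"

end

theory Submission
  imports Defs
begin

text \<open>Closure under unions of chains makes Zorn's lemma available, so every theory is the
  intersection of the totally prime theories containing it. Since \<open>h\<close> pulls prime theories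
  back to prime theories, and totally prime theories are prime, it suffices to know that
  \<open>\<or>\<close> and \<open>\<and>\<close> behave classically on prime theories of \<open>\<L>\<close>. For \<open>\<and>\<close> this holds on every
  theory by the representation. For \<open>\<or>\<close>: if \<open>a \<or> b \<in> P\<close> but \<open>a, b \<notin> P\<close>, each totally
  prime \<open>M \<supseteq> P\<close> contains \<open>a\<close> or \<open>b\<close>, so \<open>P\<close> is the intersection of the two theories
  \<open>\<Inter>{M. a \<in> M}\<close> and \<open>\<Inter>{M. b \<in> M}\<close>, and primeness forces \<open>P\<close> to be one of them.\<close>

lemma totally_prime_theory_imp_prime_theory:
  "totally_prime_theory Th T \<Longrightarrow> prime_theory Th T"
  unfolding totally_prime_theory_def prime_theory_def by auto

lemma prime_theory_eq_Int:
  assumes "prime_theory Th P" "A \<in> Th" "B \<in> Th" "P = A \<inter> B"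
  shows "P = A \<or> P = B"
proof -
  have "{A, B} \<subseteq> Th" "{A, B} \<noteq> {}" "finite {A, B}" "P = \<Inter>{A, B}"
    using assms(2-4) by auto
  then have "P \<in> {A, B}" using assms(1) unfolding prime_theory_def by blast
  then show ?thesis by blast
qed

lemma abstract_logic_Inter_mem:
  "\<lbrakk>abstract_logic Th; F \<subseteq> Th; F \<noteq> {}\<rbrakk> \<Longrightarrow> \<Inter>F \<in> Th"
  unfolding abstract_logic_def by blast

lemma totally_prime_theory_avoiding:
  assumes chains: "closed_union_chains Th" and T: "T \<in> Th" and x: "x \<notin> T"
  obtains M where "totally_prime_theory Th M" "T \<subseteq> M" "x \<notin> M"
proof -
  define A where "A = {U \<in> Th. T \<subseteq> U \<and> x \<notin> U}"
  have "\<exists>U\<in>A. \<forall>X\<in>C. X \<subseteq> U" if C: "C \<in> chains A" for C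
  proof (cases "C = {}")
    case True
    then show ?thesis using T x unfolding A_def by auto
  next
    case False
    have "C \<subseteq> Th" "\<forall>X\<in>C. \<forall>Y\<in>C. X \<subseteq> Y \<or> Y \<subseteq> X"
      using C unfolding chains_def chain_subset_def A_def by auto
    then have "\<Union>C \<in> Th"
      using chains False unfolding closed_union_chains_def by simp
    moreover have "T \<subseteq> \<Union>C" "x \<notin> \<Union>C"
      using False C unfolding chains_def A_def by auto
    ultimately show ?thesis unfolding A_def by blast
  qed
  then have "\<exists>M\<in>A. \<forall>X\<in>A. M \<subseteq> X \<longrightarrow> X = M"
    by (intro Zorn_Lemma2 ballI)
  then obtain M where M: "M \<in> A" and maximal: "\<And>X. X \<in> A \<Longrightarrow> M \<subseteq> X \<Longrightarrow> X = M"
    by blast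
  have "M \<in> F" if F: "F \<subseteq> Th" "F \<noteq> {}" "M = \<Inter>F" for F
  proof (rule ccontr)
    assume "M \<notin> F"
    \<comment> \<open>every member of \<open>F\<close> strictly extends \<open>M\<close>, so by maximality it contains \<open>x\<close>\<close>
    then have "x \<in> X" if "X \<in> F" for X
      using that F M maximal[of X] unfolding A_def by blast
    then have "x \<in> M" using F by blast
    then show False using M unfolding A_def by blast
  qed
  then have "totally_prime_theory Th M"
    using M unfolding totally_prime_theory_def A_def by blast
  then show thesis using that M unfolding A_def by blast
qed

lemma theory_eq_Inter_totally_prime_supersets:
  assumes "closed_union_chains Th" "T \<in> Th"
  shows "T = \<Inter>{M. totally_prime_theory Th M \<and> T \<subseteq> M}"
  using totally_prime_theory_avoiding[OF assms] by blast

lemma entails_if_totally_prime: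
  assumes "closed_union_chains Th"
    and "\<And>M. totally_prime_theory Th M \<Longrightarrow> x \<in> M \<Longrightarrow> y \<in> M"
  shows "entails Th x y"
  unfolding entails_def
proof (intro ballI impI)
  fix T assume "T \<in> Th" "x \<in> T"
  then show "y \<in> T"
    using assms theory_eq_Inter_totally_prime_supersets[of Th T] by blast
qed

lemma distributive_logic_meet_mem_iff:
  assumes dl: "distributive_logic Th jn mt" and T: "T \<in> Th"
  shows "mt a b \<in> T \<longleftrightarrow> a \<in> T \<and> b \<in> T"
proof -
  have "closed_union_chains Th"
    and "\<And>M. totally_prime_theory Th M \<Longrightarrow> mt a b \<in> M \<longleftrightarrow> a \<in> M \<and> b \<in> M"
    using dl unfolding distributive_logic_def by auto
  then show ?thesis
    using theory_eq_Inter_totally_prime_supersets[OF _ T] by blast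
qed

lemma distributive_logic_join_mem_iff:
  assumes dl: "distributive_logic Th jn mt" and P: "prime_theory Th P"
  shows "jn a b \<in> P \<longleftrightarrow> a \<in> P \<or> b \<in> P"
proof -
  have chains: "closed_union_chains Th" and logic: "abstract_logic Th"
    and join: "\<And>M. totally_prime_theory Th M \<Longrightarrow> jn a b \<in> M \<longleftrightarrow> a \<in> M \<or> b \<in> M"
    using dl unfolding distributive_logic_def by auto
  have PTh: "P \<in> Th" using P unfolding prime_theory_def by blast
  define S where "S = {M. totally_prime_theory Th M \<and> P \<subseteq> M}"
  have P_eq: "P = \<Inter>S"
    unfolding S_def using theory_eq_Inter_totally_prime_supersets[OF chains PTh] .
  have STh: "S \<subseteq> Th" unfolding S_def totally_prime_theory_def by blast
  have "a \<in> P \<or> b \<in> P" if ab: "jn a b \<in> P"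
  proof (rule ccontr)
    assume nab: "\<not> (a \<in> P \<or> b \<in> P)"
    define Sa where "Sa = {M \<in> S. a \<in> M}"
    define Sb where "Sb = {M \<in> S. b \<in> M}"
    have S_split: "S = Sa \<union> Sb"
      using ab join unfolding S_def Sa_def Sb_def by auto
    have "Sa \<noteq> {}" "Sb \<noteq> {}"
      using nab P_eq S_split unfolding Sa_def Sb_def by auto
    moreover have "Sa \<subseteq> Th" "Sb \<subseteq> Th" using STh unfolding Sa_def Sb_def by auto
    ultimately have "\<Inter>Sa \<in> Th" "\<Inter>Sb \<in> Th"
      using abstract_logic_Inter_mem[OF logic] by blast+
    moreover have "P = \<Inter>Sa \<inter> \<Inter>Sb" using P_eq S_split by auto
    ultimately have "P = \<Inter>Sa \<or> P = \<Inter>Sb"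
      using prime_theory_eq_Int[OF P] by blast
    moreover have "a \<in> \<Inter>Sa" "b \<in> \<Inter>Sb" unfolding Sa_def Sb_def by auto
    ultimately show False using nab by auto
  qed
  moreover have "jn a b \<in> P" if "a \<in> P \<or> b \<in> P"
    using that join P_eq unfolding S_def by auto
  ultimately show ?thesis by blast
qed

theorem lemma3p12:
  fixes Th :: "'a set set" and Th' :: "'b set set"
    and jn mt :: "'a \<Rightarrow> 'a \<Rightarrow> 'a" and jn' mt' :: "'b \<Rightarrow> 'b \<Rightarrow> 'b"
    and h :: "'a \<Rightarrow> 'b"
  assumes "distributive_logic Th jn mt"
    and "distributive_logic Th' jn' mt'"
    and "stable_logic_map Th Th' h"
  shows "\<forall>a b. logic_eq Th' (h (jn a b)) (jn' (h a) (h b)) \<and>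
               logic_eq Th' (h (mt a b)) (mt' (h a) (h b))"
proof (intro allI)
  fix a b
  have chains: "closed_union_chains Th'"
    and connectives: "\<And>x y M. totally_prime_theory Th' M \<Longrightarrow>
        (jn' x y \<in> M \<longleftrightarrow> x \<in> M \<or> y \<in> M) \<and> (mt' x y \<in> M \<longleftrightarrow> x \<in> M \<and> y \<in> M)"
    using assms(2) unfolding distributive_logic_def by auto
  have "h (jn a b) \<in> M \<longleftrightarrow> jn' (h a) (h b) \<in> M"
    "h (mt a b) \<in> M \<longleftrightarrow> mt' (h a) (h b) \<in> M"
    if M: "totally_prime_theory Th' M" for M
  proof -
    have prime: "prime_theory Th (h -` M)"
      using assms(3) totally_prime_theory_imp_prime_theory[OF M]
      unfolding stable_logic_map_def by blast
    then have "h -` M \<in> Th" unfolding prime_theory_def by blast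
    then show "h (jn a b) \<in> M \<longleftrightarrow> jn' (h a) (h b) \<in> M"
      "h (mt a b) \<in> M \<longleftrightarrow> mt' (h a) (h b) \<in> M"
      using distributive_logic_join_mem_iff[OF assms(1) prime, of a b]
        distributive_logic_meet_mem_iff[OF assms(1), of "h -` M" a b] connectives[OF M]
      by simp_all
  qed
  then show "logic_eq Th' (h (jn a b)) (jn' (h a) (h b)) \<and>
      logic_eq Th' (h (mt a b)) (mt' (h a) (h b))"
    unfolding logic_eq_def by (intro conjI entails_if_totally_prime[OF chains]; simp)
qed

end
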